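(* For every $n\ge 2$, an allocation that is both TEF1 and Pareto-optimal need not exist, for goods or for chores, even when there are only two types of items. That is, for each $n\ge2$ there is an instance with $n$ agents, all items goods, two item types, and no TEF1 and PO allocation; and likewise for chores.
   Context: Items arrive one per round in a fixed order $o_1,\dots,o_m$. Agents $N=[n]$ have additive valuations; goods have $v_i(o)\ge0$, chores $v_i(o)\le0$. "Two types of items" means the items can be partitioned into $S_1,S_2$ such that each agent values all items in the same set equally. An allocation $\mathcal{A}=(A_1,\dots,A_n)$ partitions the items; $\mathcal{A}^t$ is its restriction to $o_1,\dots,o_t$. An allocation $(B_i)$ is EF1 if for all $i,j$ there is a good $g\in B_j$ with $v_i(B_i)\ge v_i(B_j\setminus\{g\})$ (goods), resp. a chore $c\in B_i$ with $v_i(B_i\setminus\{c\})\ge v_i(B_j)$ (chores), considered satisfied if $v_i(B_i)\ge v_i(B_j)$. $\mathcal{A}$ is TEF1 if $\mathcal{A}^t$ is EF1 for every $t$. $\mathcal{A}$ is Pareto-optimal (PO) if no allocation $\mathcal{A}'$ has $v_i(A'_i)\ge v_i(A_i)$ for all $i$ with strict inequality for some $i$. *)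

theory Defs
  imports Complex_Main
begin

text \<open>Agents are 0..<n, items are 0..<m arriving in the order 0,1,...,m-1
  (item t-1 is o_t). Valuations: v i x is agent i's value for item x.
  An allocation is a map from items to agents.\<close>

definition is_alloc :: "nat \<Rightarrow> nat \<Rightarrow> (nat \<Rightarrow> nat) \<Rightarrow> bool" where
  "is_alloc n m A \<longleftrightarrow> (\<forall>x<m. A x < n)"

definition bdl :: "nat \<Rightarrow> (nat \<Rightarrow> nat) \<Rightarrow> nat \<Rightarrow> nat set" where
  "bdl t A i = {x. x < t \<and> A x = i}"

definition val :: "(nat \<Rightarrow> nat \<Rightarrow> real) \<Rightarrow> nat \<Rightarrow> nat set \<Rightarrow> real" where
  "val v i S = (\<Sum>x\<in>S. v i x)"

definition goods_instance :: "nat \<Rightarrow> nat \<Rightarrow> (nat \<Rightarrow> nat \<Rightarrow> real) \<Rightarrow> bool" where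
  "goods_instance n m v \<longleftrightarrow> (\<forall>i<n. \<forall>x<m. v i x \<ge> 0)"

definition chores_instance :: "nat \<Rightarrow> nat \<Rightarrow> (nat \<Rightarrow> nat \<Rightarrow> real) \<Rightarrow> bool" where
  "chores_instance n m v \<longleftrightarrow> (\<forall>i<n. \<forall>x<m. v i x \<le> 0)"

definition two_types :: "nat \<Rightarrow> nat \<Rightarrow> (nat \<Rightarrow> nat \<Rightarrow> real) \<Rightarrow> bool" where
  "two_types n m v \<longleftrightarrow> (\<exists>S1 S2. S1 \<union> S2 = {..<m} \<and> S1 \<inter> S2 = {} \<and> S1 \<noteq> {} \<and> S2 \<noteq> {} \<and>
     (\<forall>i<n. (\<forall>x\<in>S1. \<forall>y\<in>S1. v i x = v i y) \<and> (\<forall>x\<in>S2. \<forall>y\<in>S2. v i x = v i y)))"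

definition EF1_goods :: "nat \<Rightarrow> (nat \<Rightarrow> nat \<Rightarrow> real) \<Rightarrow> nat \<Rightarrow> (nat \<Rightarrow> nat) \<Rightarrow> bool" where
  "EF1_goods n v t A \<longleftrightarrow> (\<forall>i<n. \<forall>j<n.
      val v i (bdl t A i) \<ge> val v i (bdl t A j) \<or>
      (\<exists>g\<in>bdl t A j. val v i (bdl t A i) \<ge> val v i (bdl t A j - {g})))"

definition EF1_chores :: "nat \<Rightarrow> (nat \<Rightarrow> nat \<Rightarrow> real) \<Rightarrow> nat \<Rightarrow> (nat \<Rightarrow> nat) \<Rightarrow> bool" where
  "EF1_chores n v t A \<longleftrightarrow> (\<forall>i<n. \<forall>j<n.
      val v i (bdl t A i) \<ge> val v i (bdl t A j) \<or>
      (\<exists>c\<in>bdl t A i. val v i (bdl t A i - {c}) \<ge> val v i (bdl t A j)))"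

definition TEF1_goods :: "nat \<Rightarrow> nat \<Rightarrow> (nat \<Rightarrow> nat \<Rightarrow> real) \<Rightarrow> (nat \<Rightarrow> nat) \<Rightarrow> bool" where
  "TEF1_goods n m v A \<longleftrightarrow> (\<forall>t\<le>m. EF1_goods n v t A)"

definition TEF1_chores :: "nat \<Rightarrow> nat \<Rightarrow> (nat \<Rightarrow> nat \<Rightarrow> real) \<Rightarrow> (nat \<Rightarrow> nat) \<Rightarrow> bool" where
  "TEF1_chores n m v A \<longleftrightarrow> (\<forall>t\<le>m. EF1_chores n v t A)"

definition pareto_optimal :: "nat \<Rightarrow> nat \<Rightarrow> (nat \<Rightarrow> nat \<Rightarrow> real) \<Rightarrow> (nat \<Rightarrow> nat) \<Rightarrow> bool" where
  "pareto_optimal n m v A \<longleftrightarrow> \<not> (\<exists>A'. is_alloc n m A' \<and>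
      (\<forall>i<n. val v i (bdl m A' i) \<ge> val v i (bdl m A i)) \<and>
      (\<exists>i<n. val v i (bdl m A' i) > val v i (bdl m A i)))"

end

(*
  Goods: agent 0 values the first two items at 2 and the last three at 1, agent 1 values
  every item at 1, and all other agents value nothing.  Pareto optimality hands every item
  to agent 0 or agent 1 and, since agent 1 is indifferent between items while agent 0 prefers
  the early ones, forbids agent 0 to hold a late item while agent 1 holds an early one.  EF1
  after two rounds splits the two early items between them, so in the end agent 1 holds an
  early item and all late ones, worth 5 to agent 0 against her own 2: even after removing
  the best good (worth 2) she still envies agent 1.

  Chores: agent 0 values the first n chores at -2 and the last three at -1, every other agent
  values all chores at -1.  EF1 after n rounds gives every agent exactly one chore; exchanging
  a late chore with agent 0's first chore would be a Pareto improvement, so agent 0 takes all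
  three late chores.  Her bundle then costs her 5, agent 1's costs her 2, and dropping one
  chore saves her at most 2.
*)

theory Submission
  imports Defs
begin

lemma finite_bdl [simp]: "finite (bdl t A i)"
  unfolding bdl_def by auto

lemma val_bdl_0 [simp]: "val v i (bdl 0 A j) = 0"
  unfolding val_def bdl_def by simp

lemma val_bdl_Suc:
  "val v i (bdl (Suc t) A j) = val v i (bdl t A j) + (if A t = j then v i t else 0)"
proof -
  have "bdl (Suc t) A j = (if A t = j then insert t (bdl t A j) else bdl t A j)"
    unfolding bdl_def by (auto simp: less_Suc_eq)
  moreover have "t \<notin> bdl t A j"
    unfolding bdl_def by simp
  ultimately show ?thesis
    unfolding val_def by simp
qed

lemma val_remove:
  assumes "g \<in> B" "finite B"
  shows "val v i (B - {g}) = val v i B - v i g"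
  using assms unfolding val_def by (simp add: sum_diff1)

lemma val_bdl_fun_upd:
  assumes "x < t"
  shows "val v i (bdl t (A(x := a)) i)
           = val v i (bdl t A i) - (if A x = i then v i x else 0) + (if a = i then v i x else 0)"
proof -
  have split: "val v i S = val v i (S - {x}) + (if x \<in> S then v i x else 0)" if "finite S" for S
    using that val_remove[of x S v i] by simp
  have "bdl t (A(x := a)) i - {x} = bdl t A i - {x}"
    unfolding bdl_def by auto
  moreover have "x \<in> bdl t (A(x := a)) i \<longleftrightarrow> a = i" "x \<in> bdl t A i \<longleftrightarrow> A x = i"
    using assms unfolding bdl_def by auto
  ultimately show ?thesis
    using split[of "bdl t A i"] split[of "bdl t (A(x := a)) i"] by simp
qed

lemma val_neg:
  assumes "finite B" "B \<noteq> {}" "\<forall>x\<in>B. v i x < 0"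
  shows "val v i B < 0"
  unfolding val_def using assms sum_strict_mono[of B "v i" "\<lambda>_. 0"] by simp

lemma sum_card_bdl:
  assumes "is_alloc n m A" "t \<le> m"
  shows "(\<Sum>i<n. card (bdl t A i)) = t"
proof -
  have "(\<Union>i<n. bdl t A i) = {..<t}"
    using assms unfolding is_alloc_def bdl_def by auto
  moreover have "card (\<Union>i<n. bdl t A i) = (\<Sum>i<n. card (bdl t A i))"
    by (rule card_UN_disjoint) (auto simp: bdl_def)
  ultimately show ?thesis by simp
qed

lemma pareto_optimal_transfer:
  assumes "pareto_optimal n m v A" "is_alloc n m A" "x < m" "a < n" "v (A x) x \<le> 0"
  shows "v a x \<le> 0"
proof (rule ccontr)
  assume gain: "\<not> v a x \<le> 0"
  define A' where "A' = A(x := a)"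
  have "is_alloc n m A'"
    using assms(2,4) unfolding is_alloc_def A'_def by auto
  moreover have "\<forall>i<n. val v i (bdl m A i) \<le> val v i (bdl m A' i)"
    using assms(3,5) gain unfolding A'_def val_bdl_fun_upd[OF assms(3)] by auto
  moreover have "val v a (bdl m A a) < val v a (bdl m A' a)"
    using assms(3,5) gain unfolding A'_def val_bdl_fun_upd[OF assms(3)] by auto
  ultimately show False
    using assms(1,4) unfolding pareto_optimal_def by blast
qed

lemma pareto_optimal_swap:
  assumes "pareto_optimal n m v A" "is_alloc n m A" "x < m" "y < m" "A x \<noteq> A y"
    and "v (A x) x \<le> v (A x) y"
  shows "v (A y) x \<le> v (A y) y"
proof (rule ccontr)
  assume gain: "\<not> v (A y) x \<le> v (A y) y"
  define A' where "A' = A(x := A y, y := A x)"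
  have "x \<noteq> y" using assms(5) by blast
  then have val_A': "val v i (bdl m A' i) = val v i (bdl m A i)
      + (if A x = i then v i y - v i x else 0) + (if A y = i then v i x - v i y else 0)" for i
    using assms(5) unfolding A'_def val_bdl_fun_upd[OF assms(4)] val_bdl_fun_upd[OF assms(3)]
    by auto
  have "is_alloc n m A'"
    using assms(2-4) unfolding is_alloc_def A'_def by auto
  moreover have "\<forall>i<n. val v i (bdl m A i) \<le> val v i (bdl m A' i)"
    using assms(5,6) gain unfolding val_A' by auto
  moreover have "val v (A y) (bdl m A (A y)) < val v (A y) (bdl m A' (A y))"
    using assms(5) gain unfolding val_A' by auto
  moreover have "A y < n" using assms(2,4) unfolding is_alloc_def by blast
  ultimately show False
    using assms(1) unfolding pareto_optimal_def by blast
qed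

lemma EF1_goods_envy_bound:
  assumes "EF1_goods n v t A" "i < n" "j < n" "0 \<le> c" "\<forall>g\<in>bdl t A j. v i g \<le> c"
  shows "val v i (bdl t A j) \<le> val v i (bdl t A i) + c"
  using assms unfolding EF1_goods_def by (force simp: val_remove)

lemma EF1_chores_envy_bound:
  assumes "EF1_chores n v t A" "i < n" "j < n" "0 \<le> d" "\<forall>c\<in>bdl t A i. - d \<le> v i c"
  shows "val v i (bdl t A j) \<le> val v i (bdl t A i) + d"
  using assms unfolding EF1_chores_def by (force simp: val_remove)

lemma EF1_chores_card_le_one_if_empty:
  assumes "EF1_chores n v t A" "i < n" "j < n" "bdl t A j = {}" "\<forall>x\<in>bdl t A i. v i x < 0"
  shows "card (bdl t A i) \<le> 1"
proof (rule ccontr)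
  assume "\<not> card (bdl t A i) \<le> 1"
  then have big: "bdl t A i - {c} \<noteq> {}" for c
    using card_mono[of "{c}" "bdl t A i"] by auto
  have "val v i (bdl t A i - {c}) < 0" for c
    using assms(5) big by (intro val_neg) auto
  moreover have "val v i (bdl t A i) < 0"
    using assms(5) big by (intro val_neg) auto
  moreover have "val v i (bdl t A j) = 0"
    using assms(4) by (simp add: val_def)
  moreover have "val v i (bdl t A j) \<le> val v i (bdl t A i)
      \<or> (\<exists>c\<in>bdl t A i. val v i (bdl t A j) \<le> val v i (bdl t A i - {c}))"
    using assms(1-3) unfolding EF1_chores_def by blast
  ultimately show False by (metis linorder_not_le)
qed

lemma EF1_chores_bdl_nonempty:
  assumes "is_alloc n m A" "n \<le> t" "t \<le> m" "EF1_chores n v t A"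
    and "\<forall>i<n. \<forall>x<t. v i x < 0" "j < n"
  shows "bdl t A j \<noteq> {}"
proof
  assume empty: "bdl t A j = {}"
  have "card (bdl t A i) \<le> 1" if "i < n" for i
    using assms(4-6) empty that by (intro EF1_chores_card_le_one_if_empty) (auto simp: bdl_def)
  then have "(\<Sum>i\<in>{..<n} - {j}. card (bdl t A i)) \<le> n - 1"
    using sum_bounded_above[of "{..<n} - {j}" "\<lambda>i. card (bdl t A i)" 1] assms(6) by simp
  moreover have "(\<Sum>i<n. card (bdl t A i))
      = card (bdl t A j) + (\<Sum>i\<in>{..<n} - {j}. card (bdl t A i))"
    using assms(6) by (simp add: sum.remove)
  ultimately show False
    using sum_card_bdl[OF assms(1,3)] empty assms(2,6) by simp
qed

lemma EF1_chores_bdl_singleton: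
  assumes "is_alloc n m A" "n \<le> m" "EF1_chores n v n A" "\<forall>i<n. \<forall>x<n. v i x < 0" "i < n"
  shows "\<exists>x. bdl n A i = {x}"
proof -
  have nonempty: "bdl n A j \<noteq> {}" if "j < n" for j
    using EF1_chores_bdl_nonempty[OF assms(1) _ assms(2,3)] assms(4) that by blast
  have "card (bdl n A i) = 1"
  proof (rule ccontr)
    assume "card (bdl n A i) \<noteq> 1"
    then have "1 < card (bdl n A i)"
      using nonempty assms(5) by (simp add: card_gt_0_iff nat_neq_iff)
    then have "(\<Sum>j<n. 1) < (\<Sum>j<n. card (bdl n A j))"
      using nonempty assms(5) by (intro sum_strict_mono_ex1) (auto simp: Suc_le_eq card_gt_0_iff)
    then show False
      using sum_card_bdl[OF assms(1,2)] by simp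
  qed
  then show ?thesis
    by (metis card_1_singleton_iff One_nat_def)
qed

definition goods_example :: "nat \<Rightarrow> nat \<Rightarrow> real" where
  "goods_example i x = (if i = 0 then (if x < 2 then 2 else 1) else if i = 1 then 1 else 0)"

lemma goods_example_instance:
  "goods_instance n 5 goods_example \<and> two_types n 5 goods_example"
  unfolding goods_instance_def two_types_def
  by (intro conjI exI[of _ "{0, 1}"] exI[of _ "{2, 3, 4}"]) (auto simp: goods_example_def)

lemma goods_example_PO_owner:
  assumes "pareto_optimal n 5 goods_example A" "is_alloc n 5 A" "n \<ge> 2" "x < 5"
  shows "A x = 0 \<or> A x = 1"
proof (rule ccontr)
  assume "\<not> (A x = 0 \<or> A x = 1)"
  then have "goods_example (A x) x \<le> 0"
    by (simp add: goods_example_def)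
  then have "goods_example 0 x \<le> 0"
    using pareto_optimal_transfer[OF assms(1,2,4)] assms(3) by simp
  then show False
    by (simp add: goods_example_def split: if_splits)
qed

lemma goods_example_no_TEF1_PO:
  assumes "n \<ge> 2"
  shows "\<not> (\<exists>A. is_alloc n 5 A \<and> TEF1_goods n 5 goods_example A
          \<and> pareto_optimal n 5 goods_example A)"
proof
  assume "\<exists>A. is_alloc n 5 A \<and> TEF1_goods n 5 goods_example A
    \<and> pareto_optimal n 5 goods_example A"
  then obtain A where alloc: "is_alloc n 5 A" and TEF1: "TEF1_goods n 5 goods_example A"
    and PO: "pareto_optimal n 5 goods_example A" by blast
  note owner = goods_example_PO_owner[OF PO alloc assms]
  have EF1: "val goods_example i (bdl t A j) \<le> val goods_example i (bdl t A i) + c"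
    if "t \<le> 5" "i < n" "j < n" "0 \<le> c" "\<forall>g. goods_example i g \<le> c" for t i j c
    using TEF1 that unfolding TEF1_goods_def by (blast intro: EF1_goods_envy_bound)
  have value_bounds: "\<forall>g. goods_example 0 g \<le> 2" "\<forall>g. goods_example 1 g \<le> 1"
    by (simp_all add: goods_example_def)
  have "A 0 \<noteq> A 1"
  proof
    assume "A 0 = A 1"
    then have "A 0 = 0 \<and> A 1 = 0 \<or> A 0 = 1 \<and> A 1 = 1"
      using owner[of 0] by auto
    then show False
      using EF1[of 2 1 0 1] EF1[of 2 0 1 2] value_bounds assms
      by (auto simp: val_bdl_Suc numeral_2_eq_2 goods_example_def)
  qed
  then have first_two: "A 0 = 0 \<and> A 1 = 1 \<or> A 0 = 1 \<and> A 1 = 0"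
    using owner[of 0] owner[of 1] by auto
  then obtain s where s: "s < 2" "A s = 1"
    by (auto intro: that[of 0] that[of 1])
  have "A y = 1" if "2 \<le> y" "y < 5" for y
  proof (rule ccontr)
    assume "A y \<noteq> 1"
    then have "A y = 0" using owner that by blast
    then show False
      using pareto_optimal_swap[OF PO alloc, of s y] s that by (simp add: goods_example_def)
  qed
  then have "A 2 = 1" "A 3 = 1" "A 4 = 1"
    by simp_all
  then show False
    using first_two EF1[of 5 0 1 2] value_bounds assms
    by (auto simp: val_bdl_Suc eval_nat_numeral goods_example_def)
qed

definition chores_example :: "nat \<Rightarrow> nat \<Rightarrow> nat \<Rightarrow> real" where
  "chores_example n i x = (if i = 0 \<and> x < n then -2 else -1)"

lemma chores_example_instance:
  assumes "n \<ge> 2"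
  shows "chores_instance n (n + 3) (chores_example n) \<and> two_types n (n + 3) (chores_example n)"
  unfolding chores_instance_def two_types_def
  by (intro conjI exI[of _ "{..<n}"] exI[of _ "{n..<n + 3}"])
    (use assms in \<open>auto simp: chores_example_def lessThan_empty_iff\<close>)

lemma chores_example_no_TEF1_PO:
  assumes "n \<ge> 2"
  shows "\<not> (\<exists>A. is_alloc n (n + 3) A \<and> TEF1_chores n (n + 3) (chores_example n) A
          \<and> pareto_optimal n (n + 3) (chores_example n) A)"
proof
  assume "\<exists>A. is_alloc n (n + 3) A \<and> TEF1_chores n (n + 3) (chores_example n) A
    \<and> pareto_optimal n (n + 3) (chores_example n) A"
  then obtain A where alloc: "is_alloc n (n + 3) A"
    and TEF1: "TEF1_chores n (n + 3) (chores_example n) A"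
    and PO: "pareto_optimal n (n + 3) (chores_example n) A" by blast
  have "EF1_chores n (chores_example n) n A"
    using TEF1 unfolding TEF1_chores_def by simp
  then have singleton: "\<exists>x. bdl n A i = {x}" if "i < n" for i
    using EF1_chores_bdl_singleton[OF alloc] that by (simp add: chores_example_def)
  obtain y where y: "bdl n A 0 = {y}"
    using singleton[of 0] assms by auto
  obtain z where z: "bdl n A 1 = {z}"
    using singleton[of 1] assms by auto
  have "y < n" "A y = 0" "z < n"
    using y z unfolding bdl_def by auto
  have "A x = 0" if "n \<le> x" "x < n + 3" for x
  proof (rule ccontr)
    assume "A x \<noteq> 0"
    then show False
      using pareto_optimal_swap[OF PO alloc, of x y] \<open>y < n\<close> \<open>A y = 0\<close> that
      by (simp add: chores_example_def)
  qed
  then have "A n = 0" "A (Suc n) = 0" "A (Suc (Suc n)) = 0"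
    by auto
  moreover have "val (chores_example n) 0 (bdl n A 0) = -2"
    using y \<open>y < n\<close> by (simp add: val_def chores_example_def)
  moreover have "val (chores_example n) 0 (bdl n A 1) = -2"
    using z \<open>z < n\<close> by (simp add: val_def chores_example_def)
  ultimately have "val (chores_example n) 0 (bdl (n + 3) A 0) = -5"
    and "val (chores_example n) 0 (bdl (n + 3) A 1) = -2"
    by (simp_all add: val_bdl_Suc numeral_3_eq_3 chores_example_def)
  moreover have "EF1_chores n (chores_example n) (n + 3) A"
    using TEF1 unfolding TEF1_chores_def by simp
  moreover have "\<forall>c. -2 \<le> chores_example n 0 c"
    by (simp add: chores_example_def)
  ultimately show False
    using EF1_chores_envy_bound[of n "chores_example n" "n + 3" A 0 1 2] assms by simp
qed

theorem proposition2:
  fixes n :: nat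
  assumes "n \<ge> 2"
  shows "(\<exists>m v. goods_instance n m v \<and> two_types n m v \<and>
            \<not> (\<exists>A. is_alloc n m A \<and> TEF1_goods n m v A \<and> pareto_optimal n m v A))
       \<and> (\<exists>m v. chores_instance n m v \<and> two_types n m v \<and>
            \<not> (\<exists>A. is_alloc n m A \<and> TEF1_chores n m v A \<and> pareto_optimal n m v A))"
  using goods_example_instance goods_example_no_TEF1_PO[OF assms]
    chores_example_instance[OF assms] chores_example_no_TEF1_PO[OF assms]
  by blast

end
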